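(* Let $0<\lambda\le1$ and $f\in\mathcal U(\lambda)$. Then the odd function $f_2$ defined by $$\frac{z}{f_2(z)}=\frac12\left(\frac{z}{f(z)}+\frac{z}{-f(-z)}\right),\qquad z\in\mathbb D,$$ belongs to $\mathcal U(\lambda)$.
   Context: $\mathbb D=\{z\in\mathbb C:|z|<1\}$. $\mathcal A$ is the class of functions $f$ analytic in $\mathbb D$ with $f(z)=z+\sum_{k\ge2}a_kz^k$. For $f\in\mathcal A$ with $f(z)\ne0$ for $z\in\mathbb D\setminus\{0\}$, set $U_f(z)=\left(\frac{z}{f(z)}\right)^2f'(z)-1$. For $0<\lambda\le1$, $\mathcal U(\lambda)$ is the class of such $f\in\mathcal A$ with $|U_f(z)|<\lambda$ for all $z\in\mathbb D$. *)

theory Defs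
  imports "HOL-Complex_Analysis.Complex_Analysis"
begin

definition unit_disk :: "complex set" where
  "unit_disk = ball 0 1"

definition classA :: "(complex \<Rightarrow> complex) set" where
  "classA = {f. f holomorphic_on unit_disk \<and> f 0 = 0 \<and> deriv f 0 = 1}"

text \<open>U_f(z) = (z / f z)^2 f'(z) - 1.  At z = 0 it is defined by its (removable)
  limit, which equals 0; so the condition |U_f| < lambda is only imposed on
  the punctured disk (at 0 it holds trivially since lambda > 0).\<close>
definition U_op :: "(complex \<Rightarrow> complex) \<Rightarrow> complex \<Rightarrow> complex" where
  "U_op f z = (if z = 0 then 0 else (z / f z)^2 * deriv f z - 1)"

definition classU :: "real \<Rightarrow> (complex \<Rightarrow> complex) set" where
  "classU lam = {f. f \<in> classA \<and> (\<forall>z\<in>unit_disk - {0}. f z \<noteq> 0)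
                    \<and> (\<forall>z\<in>unit_disk. norm (U_op f z) < lam)}"

definition odd_part :: "(complex \<Rightarrow> complex) \<Rightarrow> complex \<Rightarrow> complex" where
  "odd_part f z = (if z = 0 then 0
                   else z / ((1/2) * (z / f z + z / (- f (- z)))))"

end

theory Submission
  imports Defs
begin

text \<open>Write \<open>f z = z / g z\<close>; then \<open>U\<^sub>f = g - z g' - 1\<close>, and \<open>f\<^sub>2\<close> corresponds in the same way
  to the even part \<open>G\<close> of \<open>g\<close>. Its defect \<open>V = G - z G' - 1\<close> is the average of \<open>U\<^sub>f(z)\<close> and
  \<open>U\<^sub>f(-z)\<close>, hence bounded by \<open>\<lambda>\<close>. The real point is that \<open>G\<close> has no zeros: \<open>V\<close> is even and
  vanishes at 0, so Schwarz's lemma gives \<open>|V z| \<le> |z|\<^sup>2\<close>; as \<open>(G - 1)/z\<close> vanishes at 0 and has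
  derivative \<open>-V/z\<^sup>2\<close>, it is 1-Lipschitz, whence \<open>|G z - 1| \<le> |z|\<^sup>2 < 1\<close>.\<close>

lemma continuous_on_norm_le_at_point:
  fixes h :: "'a::perfect_space \<Rightarrow> 'b::real_normed_vector"
  assumes "continuous_on S h" "open S" "a \<in> S" "\<And>z. z \<in> S \<Longrightarrow> z \<noteq> a \<Longrightarrow> norm (h z) \<le> B"
  shows "norm (h a) \<le> B"
proof (rule Lim_norm_ubound[OF trivial_limit_at])
  show "(h \<longlongrightarrow> h a) (at a)"
    using assms(1-3) by (metis at_within_open continuous_on_def)
  show "\<forall>\<^sub>F z in at a. norm (h z) \<le> B"
    using eventually_at_in_open[OF assms(2,3)] by eventually_elim (use assms(4) in auto)
qed

lemma deriv_reflect:
  fixes g :: "complex \<Rightarrow> complex"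
  assumes "g field_differentiable at (- z)"
  shows "deriv (\<lambda>w. g (- w)) z = - deriv g (- z)"
  using deriv_compose_linear[of g "-1" z] assms by simp

lemma holomorphic_on_reflect_ball:
  fixes g :: "complex \<Rightarrow> complex"
  assumes "g holomorphic_on ball 0 r"
  shows "(\<lambda>w. g (- w)) holomorphic_on ball 0 r"
proof -
  have "(g \<circ> uminus) holomorphic_on ball 0 r"
    by (intro holomorphic_on_compose holomorphic_intros holomorphic_on_subset[OF assms]) auto
  then show ?thesis by (simp add: o_def)
qed

lemma deriv_even_eq_0:
  fixes f :: "complex \<Rightarrow> complex"
  assumes "f holomorphic_on ball 0 r" "0 < r" "\<And>z. norm z < r \<Longrightarrow> f (- z) = f z"
  shows "deriv f 0 = 0"
proof -
  have "f field_differentiable at 0"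
    using holomorphic_on_imp_differentiable_at[OF assms(1)] assms(2) by simp
  moreover have "deriv (\<lambda>w. f (- w)) 0 = deriv f 0"
  proof (rule deriv_cong_ev[OF _ refl])
    show "\<forall>\<^sub>F w in nhds 0. f (- w) = f w"
      using eventually_nhds_in_open[of "ball 0 r" 0] assms(2,3)
      by (auto elim!: eventually_mono)
  qed
  ultimately show ?thesis using deriv_reflect[of f 0] by simp
qed

lemma Schwarz_Lemma_even:
  fixes V :: "complex \<Rightarrow> complex"
  assumes holV: "V holomorphic_on ball 0 1" and V0: "V 0 = 0"
    and even: "\<And>z. norm z < 1 \<Longrightarrow> V (- z) = V z"
    and bounded: "\<And>z. norm z < 1 \<Longrightarrow> norm (V z) < 1"
    and z: "norm z < 1"
  shows "norm (V z) \<le> norm z ^ 2"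
proof -
  obtain V1 where holV1: "V1 holomorphic_on ball 0 1"
    and V_eq: "\<And>w. norm w < 1 \<Longrightarrow> V w = w * V1 w" and dV0: "deriv V 0 = V1 0"
    using Schwarz3[OF holV V0] by blast
  have V1_0: "V1 0 = 0"
    using dV0 deriv_even_eq_0[OF holV zero_less_one even] by simp
  \<comment> \<open>An even function is not a rotation, so the extremal case of Schwarz's lemma is excluded.\<close>
  have strict: "norm (V w) < norm w" if w: "norm w < 1" "w \<noteq> 0" for w
  proof (rule ccontr)
    assume "\<not> norm (V w) < norm w"
    then have "norm (V w) = norm w"
      using Schwarz_Lemma(1)[OF holV V0 bounded w(1)] by simp
    then obtain \<alpha> where rot: "\<And>u. norm u < 1 \<Longrightarrow> V u = \<alpha> * u" and "norm \<alpha> = 1"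
      using Schwarz_Lemma(3)[OF holV V0 bounded w(1)] w by blast
    then show False
      using rot[of w] rot[of "- w"] even[of w] w by (simp add: algebra_simps)
  qed
  have V1_bounded: "norm (V1 w) < 1" if w: "norm w < 1" for w
  proof (cases "w = 0")
    case False
    then have "norm w * norm (V1 w) < norm w * 1"
      using strict[OF w False] V_eq[OF w] by (simp add: norm_mult)
    then show ?thesis
      using False by simp
  qed (simp add: V1_0)
  have "norm (V1 z) \<le> norm z"
    using Schwarz_Lemma(1)[OF holV1 V1_0 V1_bounded z] .
  then show ?thesis
    by (simp add: V_eq[OF z] norm_mult power2_eq_square mult_left_mono)
qed

lemma norm_sub_one_le_norm_square:
  fixes G :: "complex \<Rightarrow> complex"
  assumes holG: "G holomorphic_on ball 0 1" and G0: "G 0 = 1" and dG0: "deriv G 0 = 0"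
    and bound: "\<And>w. norm w < 1 \<Longrightarrow> norm (G w - w * deriv G w - 1) \<le> norm w ^ 2"
    and z: "norm z < 1"
  shows "norm (G z - 1) \<le> norm z ^ 2"
proof -
  have holH: "(\<lambda>w. G w - 1) holomorphic_on ball 0 1"
    by (intro holomorphic_intros holG)
  obtain W where holW: "W holomorphic_on ball 0 1"
    and G_eq: "\<And>w. norm w < 1 \<Longrightarrow> G w - 1 = w * W w" and dH0: "deriv (\<lambda>w. G w - 1) 0 = W 0"
    using Schwarz3[OF holH] G0 by auto
  have W0: "W 0 = 0"
    using dH0 dG0 holomorphic_on_imp_differentiable_at[OF holG] by simp
  have dW: "norm (deriv W w) \<le> 1" if w: "w \<in> ball 0 1" "w \<noteq> 0" for w
  proof -
    have "\<forall>\<^sub>F u in nhds w. u \<in> ball 0 1 - {0}"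
      using w by (intro eventually_nhds_in_open) auto
    then have "\<forall>\<^sub>F u in nhds w. W u = (G u - 1) / u"
      by eventually_elim (simp add: G_eq)
    then have "deriv W w = deriv (\<lambda>u. (G u - 1) / u) w"
      by (rule deriv_cong_ev[OF _ refl])
    also have "\<dots> = (deriv G w * w - (G w - 1)) / w ^ 2"
    proof (rule DERIV_imp_deriv)
      have "(G has_field_derivative deriv G w) (at w)"
        using holomorphic_derivI[OF holG open_ball] w(1) .
      then show "((\<lambda>u. (G u - 1) / u) has_field_derivative (deriv G w * w - (G w - 1)) / w ^ 2) (at w)"
        using w(2) by (auto intro!: derivative_eq_intros simp: power2_eq_square)
    qed
    also have "\<dots> = - (G w - w * deriv G w - 1) / w ^ 2"
      by (simp add: algebra_simps)
    finally have "norm (deriv W w) = norm (G w - w * deriv G w - 1) / norm w ^ 2"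
      by (simp only: norm_divide norm_minus_cancel norm_power)
    then show ?thesis
      using bound[of w] w by (simp add: divide_le_eq)
  qed
  have "norm (deriv W 0) \<le> 1"
  proof (rule continuous_on_norm_le_at_point[where S = "ball 0 1" and h = "deriv W"])
    show "continuous_on (ball 0 1) (deriv W)"
      using holomorphic_deriv[OF holW open_ball] by (rule holomorphic_on_imp_continuous_on)
  qed (use dW in auto)
  with dW have "norm (deriv W w) \<le> 1" if "w \<in> ball 0 1" for w
    using that by blast
  then have "norm (W z - W 0) \<le> 1 * norm (z - 0)"
    using z holomorphic_derivI[OF holW open_ball]
    by (intro field_differentiable_bound[of "ball 0 1"]) (auto intro: has_field_derivative_at_within)
  then show ?thesis
    using z by (simp add: G_eq W0 norm_mult power2_eq_square mult_left_mono)
qed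

lemma even_part_defect_bound:
  fixes g G :: "complex \<Rightarrow> complex" and lam :: real
  assumes G_def: "G = (\<lambda>z. (g z + g (- z)) / 2)"
    and holg: "g holomorphic_on ball 0 1" and g0: "g 0 = 1" and lam: "lam \<le> 1"
    and bound: "\<And>z. z \<in> ball 0 1 \<Longrightarrow> norm (g z - z * deriv g z - 1) < lam"
    and z: "z \<in> ball 0 1"
  shows "G z \<noteq> 0" and "norm (G z - z * deriv G z - 1) < lam"
proof -
  have holg_reflect: "(\<lambda>z. g (- z)) holomorphic_on ball 0 1"
    using holomorphic_on_reflect_ball[OF holg] .
  have holG: "G holomorphic_on ball 0 1"
    unfolding G_def by (intro holomorphic_intros holg holg_reflect) auto
  have G_even: "G (- w) = G w" for w
    by (simp add: G_def add.commute)
  have dG: "deriv G w = (deriv g w - deriv g (- w)) / 2" if w: "w \<in> ball 0 1" for w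
  proof -
    have "- w \<in> ball 0 1"
      using w by simp
    then have "g field_differentiable at w" "g field_differentiable at (- w)"
      "(\<lambda>z. g (- z)) field_differentiable at w"
      using w holg holg_reflect by (auto intro: holomorphic_on_imp_differentiable_at)
    moreover from this have "(\<lambda>z. g z + g (- z)) field_differentiable at w"
      by (intro field_differentiable_add)
    ultimately show ?thesis
      by (simp add: G_def deriv_cdivide_right deriv_reflect)
  qed
  define V where "V w = G w - w * deriv G w - 1" for w
  define u where "u w = g w - w * deriv g w - 1" for w
  have V_bound: "norm (V w) < lam" if "w \<in> ball 0 1" for w
  proof -
    have "V w = (u w + u (- w)) / 2"
      unfolding V_def u_def dG[OF that] by (simp add: G_def field_simps)
    then have "norm (V w) = norm (u w + u (- w)) / 2"
      by (simp only: norm_divide) simp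
    also have "\<dots> \<le> (norm (u w) + norm (u (- w))) / 2"
      by (simp add: norm_triangle_ineq)
    also have "\<dots> < lam"
      using bound[of w] bound[of "- w"] that by (simp add: u_def)
    finally show ?thesis .
  qed
  have holV: "V holomorphic_on ball 0 1"
    unfolding V_def by (intro holomorphic_intros holG holomorphic_deriv) auto
  have "deriv G 0 = 0"
    using deriv_even_eq_0[OF holG zero_less_one] G_even by blast
  moreover have "G 0 = 1"
    by (simp add: G_def g0)
  moreover have "norm (V w) \<le> norm w ^ 2" if "norm w < 1" for w
  proof (rule Schwarz_Lemma_even[OF holV _ _ _ that])
    show "V 0 = 0"
      by (simp add: V_def \<open>G 0 = 1\<close>)
    show "V (- v) = V v" if "norm v < 1" for v
      using that by (simp add: V_def dG G_even algebra_simps)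
    show "norm (V v) < 1" if "norm v < 1" for v
      using V_bound[of v] lam that by simp
  qed
  ultimately have G_near_1: "norm (G z - 1) \<le> norm z ^ 2"
    using norm_sub_one_le_norm_square[OF holG] z by (simp add: V_def)
  show "G z \<noteq> 0"
  proof
    assume "G z = 0"
    then have "1 \<le> norm z ^ 2"
      using G_near_1 by simp
    moreover have "norm z ^ 2 < 1"
      using z by (simp add: power_less_one_iff abs_square_less_1)
    ultimately show False
      by simp
  qed
  show "norm (G z - z * deriv G z - 1) < lam"
    using V_bound[OF z] by (simp add: V_def)
qed

lemma id_div_factorization:
  fixes f :: "complex \<Rightarrow> complex"
  assumes holf: "f holomorphic_on ball 0 1" and f0: "f 0 = 0" and df0: "deriv f 0 = 1"
    and nz: "\<And>z. z \<in> ball 0 1 \<Longrightarrow> z \<noteq> 0 \<Longrightarrow> f z \<noteq> 0"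
  obtains g where "g holomorphic_on ball 0 1" "g 0 = 1" "\<And>z. z \<in> ball 0 1 \<Longrightarrow> g z \<noteq> 0"
    "\<And>z. z \<in> ball 0 1 \<Longrightarrow> f z = z / g z"
proof -
  obtain q where holq: "q holomorphic_on ball 0 1" and f_eq: "\<And>z. norm z < 1 \<Longrightarrow> f z = z * q z"
    and q0: "deriv f 0 = q 0"
    using Schwarz3[OF holf f0] by blast
  have q_nz: "q z \<noteq> 0" if "z \<in> ball 0 1" for z
    using nz[OF that] f_eq[of z] that q0 df0 by (cases "z = 0") auto
  show ?thesis
  proof
    show "(\<lambda>z. 1 / q z) holomorphic_on ball 0 1"
      by (intro holomorphic_intros holq) (use q_nz in auto)
  qed (use q0 df0 q_nz f_eq in auto)
qed

lemma has_field_derivative_id_div: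
  fixes g :: "complex \<Rightarrow> complex"
  assumes holg: "g holomorphic_on S" and S: "open S" "z \<in> S"
    and nz: "\<And>w. w \<in> S \<Longrightarrow> g w \<noteq> 0" and f_eq: "\<And>w. w \<in> S \<Longrightarrow> f w = w / g w"
  shows "(f has_field_derivative (g z - z * deriv g z) / g z ^ 2) (at z)"
proof -
  have "((\<lambda>w. w / g w) has_field_derivative (g z - z * deriv g z) / g z ^ 2) (at z)"
    using holomorphic_derivI[OF holg S] nz[OF S(2)]
    by (auto intro!: derivative_eq_intros simp: power2_eq_square algebra_simps)
  then show ?thesis
    by (rule has_field_derivative_transform_within_open[OF _ S]) (simp add: f_eq)
qed

lemma U_op_id_div:
  fixes g :: "complex \<Rightarrow> complex"
  assumes "g holomorphic_on S" "open S" "z \<in> S" "z \<noteq> 0"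
    and nz: "\<And>w. w \<in> S \<Longrightarrow> g w \<noteq> 0" and f_eq: "\<And>w. w \<in> S \<Longrightarrow> f w = w / g w"
  shows "U_op f z = g z - z * deriv g z - 1"
  using DERIV_imp_deriv[OF has_field_derivative_id_div[OF assms(1-3) nz f_eq]] assms(3,4)
  by (simp add: U_op_def f_eq nz power2_eq_square)

lemma classU_id_divI:
  fixes g f :: "complex \<Rightarrow> complex"
  assumes holg: "g holomorphic_on ball 0 1" and g0: "g 0 = 1"
    and nz: "\<And>z. z \<in> ball 0 1 \<Longrightarrow> g z \<noteq> 0" and f_eq: "\<And>z. z \<in> ball 0 1 \<Longrightarrow> f z = z / g z"
    and lam: "0 < lam" and bound: "\<And>z. z \<in> ball 0 1 \<Longrightarrow> norm (g z - z * deriv g z - 1) < lam"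
  shows "f \<in> classU lam"
proof -
  note df = has_field_derivative_id_div[OF holg open_ball _ nz f_eq]
  have "f holomorphic_on ball 0 1"
    using df by (auto simp: holomorphic_on_open) blast
  moreover have "deriv f 0 = 1"
    using DERIV_imp_deriv[OF df[of 0]] g0 by simp
  moreover have "norm (U_op f z) < lam" if "z \<in> ball 0 1" for z
    using U_op_id_div[OF holg open_ball that _ nz f_eq] bound[OF that] lam
    by (cases "z = 0") (auto simp: U_op_def)
  ultimately show ?thesis
    using f_eq[of 0] nz by (auto simp: classU_def classA_def unit_disk_def f_eq)
qed

theorem corollary5p4:
  fixes lam :: real and f :: "complex \<Rightarrow> complex"
  assumes "0 < lam" and "lam \<le> 1" and "f \<in> classU lam"
  shows "odd_part f \<in> classU lam"
proof -
  have holf: "f holomorphic_on ball 0 1" and "f 0 = 0" "deriv f 0 = 1"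
    and f_nz: "\<And>z. z \<in> ball 0 1 \<Longrightarrow> z \<noteq> 0 \<Longrightarrow> f z \<noteq> 0"
    and f_bound: "\<And>z. z \<in> ball 0 1 \<Longrightarrow> norm (U_op f z) < lam"
    using assms(3) by (auto simp: classU_def classA_def unit_disk_def)
  obtain g where holg: "g holomorphic_on ball 0 1" and "g 0 = 1"
    and g_nz: "\<And>z. z \<in> ball 0 1 \<Longrightarrow> g z \<noteq> 0" and f_eq: "\<And>z. z \<in> ball 0 1 \<Longrightarrow> f z = z / g z"
    using id_div_factorization[OF holf \<open>f 0 = 0\<close> \<open>deriv f 0 = 1\<close> f_nz] by blast
  have g_bound: "norm (g z - z * deriv g z - 1) < lam" if "z \<in> ball 0 1" for z
    using f_bound[OF that] U_op_id_div[OF holg open_ball that _ g_nz f_eq] assms(1) \<open>g 0 = 1\<close>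
    by (cases "z = 0") auto
  define G where "G = (\<lambda>z. (g z + g (- z)) / 2)"
  have holG: "G holomorphic_on ball 0 1"
    unfolding G_def by (intro holomorphic_intros holg holomorphic_on_reflect_ball) auto
  note G_props = even_part_defect_bound[OF G_def holg \<open>g 0 = 1\<close> assms(2) g_bound]
  have odd_part_eq: "odd_part f z = z / G z" if "z \<in> ball 0 1" for z
  proof (cases "z = 0")
    case False
    then have "z / f z = g z" "z / (- f (- z)) = g (- z)"
      using that f_eq[of z] f_eq[of "- z"] g_nz[of z] g_nz[of "- z"] by auto
    then show ?thesis
      using False by (simp add: odd_part_def G_def)
  qed (simp add: odd_part_def)
  show ?thesis
    by (rule classU_id_divI[OF holG _ G_props(1) odd_part_eq assms(1) G_props(2)])
      (simp add: G_def \<open>g 0 = 1\<close>)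
qed

end
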